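(* Let $G=(V,w,m)$ be a locally finite weighted graph having the hypercube shell structure $HSS(N,W,x_0)$ for some $N,W>0$ and $x_0\in V$. Then for every integer $n\ge0$, $$m(S_n(x_0))=m(x_0)\binom Nn,$$ where $m(A)=\sum_{x\in A}m(x)$ and $\binom Nn=\frac{N(N-1)\cdots(N-n+1)}{n!}$.
   Context: A weighted graph is $G=(V,w,m)$ with $V$ countable, $w:V\times V\to[0,\infty)$ symmetric with $w(x,x)=0$, $m:V\to(0,\infty)$; $x\sim y$ iff $w(x,y)>0$. $\operatorname{Deg}(x)=\frac1{m(x)}\sum_yw(x,y)$. $d$ is the combinatorial distance, $S_n(x)=\{y:d(x,y)=n\}$. $d_-^{x_0}(z)=\sum_{y\sim z,\ d(y,x_0)<d(z,x_0)}\frac{w(y,z)}{m(z)}$. $HSS(N,W,x_0)$: (i) $\operatorname{Deg}(x)=NW$ for all $x\in V$; (ii) $G$ is bipartite; (iii) $d_-^{x_0}(x)=W\,d(x,x_0)$ for all $x\in V$. *)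

theory Defs
  imports Complex_Main "HOL-Library.Countable_Set" "HOL-Library.Extended_Nat"
begin

definition weighted_graph :: "'a set \<Rightarrow> ('a \<Rightarrow> 'a \<Rightarrow> real) \<Rightarrow> ('a \<Rightarrow> real) \<Rightarrow> bool" where
  "weighted_graph V w m \<longleftrightarrow> countable V
     \<and> (\<forall>x y. w x y = w y x) \<and> (\<forall>x y. 0 \<le> w x y) \<and> (\<forall>x. w x x = 0)
     \<and> (\<forall>x y. w x y \<noteq> 0 \<longrightarrow> x \<in> V \<and> y \<in> V)
     \<and> (\<forall>x\<in>V. 0 < m x)"

definition adj :: "'a set \<Rightarrow> ('a \<Rightarrow> 'a \<Rightarrow> real) \<Rightarrow> 'a \<Rightarrow> 'a \<Rightarrow> bool" where
  "adj V w x y \<longleftrightarrow> x \<in> V \<and> y \<in> V \<and> 0 < w x y"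

definition nbrs :: "'a set \<Rightarrow> ('a \<Rightarrow> 'a \<Rightarrow> real) \<Rightarrow> 'a \<Rightarrow> 'a set" where
  "nbrs V w x = {y. adj V w x y}"

definition locally_finite :: "'a set \<Rightarrow> ('a \<Rightarrow> 'a \<Rightarrow> real) \<Rightarrow> bool" where
  "locally_finite V w \<longleftrightarrow> (\<forall>x\<in>V. finite (nbrs V w x))"

definition gdist :: "'a set \<Rightarrow> ('a \<Rightarrow> 'a \<Rightarrow> real) \<Rightarrow> 'a \<Rightarrow> 'a \<Rightarrow> enat" where
  "gdist V w x y = (if \<exists>n. (adj V w ^^ n) x y
                    then enat (LEAST n. (adj V w ^^ n) x y) else \<infinity>)"

definition sphere :: "'a set \<Rightarrow> ('a \<Rightarrow> 'a \<Rightarrow> real) \<Rightarrow> 'a \<Rightarrow> nat \<Rightarrow> 'a set" where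
  "sphere V w x n = {y\<in>V. gdist V w x y = enat n}"

definition Deg :: "'a set \<Rightarrow> ('a \<Rightarrow> 'a \<Rightarrow> real) \<Rightarrow> ('a \<Rightarrow> real) \<Rightarrow> 'a \<Rightarrow> real" where
  "Deg V w m x = (\<Sum>y\<in>nbrs V w x. w x y) / m x"

definition dminus :: "'a set \<Rightarrow> ('a \<Rightarrow> 'a \<Rightarrow> real) \<Rightarrow> ('a \<Rightarrow> real) \<Rightarrow> 'a \<Rightarrow> 'a \<Rightarrow> real" where
  "dminus V w m x0 z =
     (\<Sum>y\<in>{y\<in>nbrs V w z. gdist V w y x0 < gdist V w z x0}. w y z / m z)"

definition bipartite :: "'a set \<Rightarrow> ('a \<Rightarrow> 'a \<Rightarrow> real) \<Rightarrow> bool" where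
  "bipartite V w \<longleftrightarrow> (\<exists>A. \<forall>x y. adj V w x y \<longrightarrow> (x \<in> A \<longleftrightarrow> y \<notin> A))"

text \<open>HSS(N,W,x0). Condition (iii) is imposed at vertices at finite distance from x0.\<close>
definition HSS :: "'a set \<Rightarrow> ('a \<Rightarrow> 'a \<Rightarrow> real) \<Rightarrow> ('a \<Rightarrow> real) \<Rightarrow> real \<Rightarrow> real \<Rightarrow> 'a \<Rightarrow> bool" where
  "HSS V w m N W x0 \<longleftrightarrow> x0 \<in> V
     \<and> (\<forall>x\<in>V. Deg V w m x = N * W)
     \<and> bipartite V w
     \<and> (\<forall>x\<in>V. \<forall>k. gdist V w x x0 = enat k \<longrightarrow> dminus V w m x0 x = W * real k)"

end

theory Submission
  imports Defs
begin

text \<open>Count the weight of the edges between the spheres S(n) and S(n+1) in two ways.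
  By bipartiteness a vertex of S(n) has no neighbours in S(n), so the part of its degree
  not counted by d_- goes forward: it sends weight (N - n) W m(x) to S(n+1). Conversely
  each z in S(n+1) receives d_-(z) m(z) = (n + 1) W m(z) from S(n). Hence
  (n + 1) m(S(n+1)) = (N - n) m(S(n)), which is the recursion satisfied by m(x0) (N choose n).\<close>

lemma relpowp_symp:
  assumes "symp P" and "(P ^^ n) x y"
  shows "(P ^^ n) y x"
  using assms(2)
proof (induction n arbitrary: y)
  case 0
  then show ?case by simp
next
  case (Suc n)
  from Suc.prems obtain u where "(P ^^ n) x u" "P u y" by (rule relpowp_Suc_E)
  with Suc.IH \<open>symp P\<close> have "P y u" "(P ^^ n) u x" by (auto dest: sympD)
  then show ?case by (rule relpowp_Suc_I2)
qed

lemma relpowp_parity: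
  assumes "\<And>x y. P x y \<Longrightarrow> x \<in> A \<longleftrightarrow> y \<notin> A" and "(P ^^ k) x y"
  shows "(x \<in> A \<longleftrightarrow> y \<in> A) \<longleftrightarrow> even k"
  using assms(2)
proof (induction k arbitrary: y)
  case 0
  then show ?case by simp
next
  case (Suc k)
  from Suc.prems obtain u where "(P ^^ k) x u" "P u y" by (rule relpowp_Suc_E)
  then show ?case using Suc.IH[of u] assms(1)[of u y] by auto
qed

lemma weighted_graph_pos: "weighted_graph V w m \<Longrightarrow> x \<in> V \<Longrightarrow> 0 < m x"
  unfolding weighted_graph_def by blast

lemma weighted_graph_commute: "weighted_graph V w m \<Longrightarrow> w x y = w y x"
  unfolding weighted_graph_def by blast

lemma weight_eq_0_if_not_nbr:
  assumes "weighted_graph V w m" and "x \<in> V" and "y \<notin> nbrs V w x"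
  shows "w x y = 0"
proof (rule ccontr)
  assume "w x y \<noteq> 0"
  moreover have "0 \<le> w x y" and "w x y \<noteq> 0 \<longrightarrow> y \<in> V"
    using assms(1) unfolding weighted_graph_def by blast+
  ultimately show False using assms(2,3) unfolding nbrs_def adj_def by simp
qed

lemma symp_adj: "weighted_graph V w m \<Longrightarrow> symp (adj V w)"
  unfolding adj_def by (auto intro: sympI simp: weighted_graph_commute)

lemma gdist_commute:
  assumes "symp (adj V w)"
  shows "gdist V w x y = gdist V w y x"
proof -
  have "(adj V w ^^ n) x y \<longleftrightarrow> (adj V w ^^ n) y x" for n
    using relpowp_symp[OF assms] by blast
  then show ?thesis unfolding gdist_def by simp
qed

lemma gdist_le_relpowp: "(adj V w ^^ k) x y \<Longrightarrow> gdist V w x y \<le> enat k"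
  unfolding gdist_def by (auto intro: Least_le)

lemma relpowp_gdist: "gdist V w x y = enat k \<Longrightarrow> (adj V w ^^ k) x y"
  unfolding gdist_def by (auto split: if_splits intro: LeastI)

lemma gdist_adj_le:
  assumes "gdist V w x y = enat k" and "adj V w y z"
  obtains j where "gdist V w x z = enat j" and "j \<le> Suc k"
proof -
  have "(adj V w ^^ Suc k) x z"
    using relpowp_gdist[OF assms(1)] assms(2) by (rule relpowp_Suc_I)
  then have "gdist V w x z \<le> enat (Suc k)" by (rule gdist_le_relpowp)
  then show ?thesis using that by (cases "gdist V w x z") auto
qed

lemma gdist_Suc_E:
  assumes "gdist V w x z = enat (Suc n)"
  obtains y where "adj V w y z" and "gdist V w x y = enat n"
proof -
  obtain y where y: "(adj V w ^^ n) x y" "adj V w y z"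
    using relpowp_gdist[OF assms] by (rule relpowp_Suc_E)
  obtain j where j: "gdist V w x y = enat j" "j \<le> n"
    using gdist_le_relpowp[OF y(1)] by (cases "gdist V w x y") auto
  obtain i where "gdist V w x z = enat i" "i \<le> Suc j"
    using gdist_adj_le[OF j(1) y(2)] .
  with assms j(2) have "j = n" by simp
  with y j show ?thesis using that by blast
qed

text \<open>Parity rules out \<open>gdist V w x z = enat k\<close>.\<close>
lemma gdist_adj_bipartite:
  assumes "symp (adj V w)" and "bipartite V w"
    and "gdist V w x y = enat k" and "adj V w y z"
  obtains "gdist V w x z = enat (Suc k)" | j where "k = Suc j" and "gdist V w x z = enat j"
proof -
  obtain A where A: "\<And>u v. adj V w u v \<Longrightarrow> u \<in> A \<longleftrightarrow> v \<notin> A"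
    using assms(2) unfolding bipartite_def by blast
  obtain j where j: "gdist V w x z = enat j" "j \<le> Suc k"
    using gdist_adj_le[OF assms(3,4)] .
  have "adj V w z y" using assms(1,4) by (rule sympD)
  then obtain i where "gdist V w x y = enat i" "i \<le> Suc j"
    using gdist_adj_le[OF j(1)] by blast
  with assms(3) have "k \<le> Suc j" by simp
  moreover have "even k \<noteq> even j"
    using relpowp_parity[OF A relpowp_gdist[OF assms(3)]]
      relpowp_parity[OF A relpowp_gdist[OF j(1)]] A[OF assms(4)] by blast
  ultimately have "j = Suc k \<or> k = Suc j" using j(2) by (cases "j = k") auto
  with j(1) that show ?thesis by auto
qed

lemma sphere_0:
  assumes "x0 \<in> V"
  shows "sphere V w x0 0 = {x0}"
proof -
  have "gdist V w x0 y = enat 0 \<longleftrightarrow> y = x0" for y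
    using relpowp_gdist[of V w x0 y 0] gdist_le_relpowp[of 0 V w x0 x0]
    by (auto simp flip: zero_enat_def)
  then show ?thesis unfolding sphere_def using assms by auto
qed

lemma finite_sphere:
  assumes "locally_finite V w"
  shows "finite (sphere V w x0 n)"
proof (induction n)
  case 0
  have "sphere V w x0 0 \<subseteq> {x0}"
    unfolding sphere_def by (auto dest: relpowp_gdist)
  then show ?case by (rule finite_subset) simp
next
  case (Suc n)
  have "sphere V w x0 (Suc n) \<subseteq> (\<Union>x\<in>sphere V w x0 n. nbrs V w x)"
  proof
    fix z assume "z \<in> sphere V w x0 (Suc n)"
    then obtain y where "adj V w y z" "gdist V w x0 y = enat n"
      unfolding sphere_def by (auto elim: gdist_Suc_E)
    then show "z \<in> (\<Union>x\<in>sphere V w x0 n. nbrs V w x)"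
      unfolding sphere_def nbrs_def adj_def by auto
  qed
  moreover have "finite (\<Union>x\<in>sphere V w x0 n. nbrs V w x)"
    using Suc.IH assms unfolding locally_finite_def sphere_def by auto
  ultimately show ?case by (rule finite_subset)
qed

definition lower_nbrs :: "'a set \<Rightarrow> ('a \<Rightarrow> 'a \<Rightarrow> real) \<Rightarrow> 'a \<Rightarrow> 'a \<Rightarrow> 'a set" where
  "lower_nbrs V w x0 z = {y\<in>nbrs V w z. gdist V w y x0 < gdist V w z x0}"

lemma lower_nbrs_Suc:
  assumes "symp (adj V w)" and "z \<in> sphere V w x0 (Suc n)"
  shows "lower_nbrs V w x0 z = nbrs V w z \<inter> sphere V w x0 n"
proof -
  have dz: "gdist V w x0 z = enat (Suc n)" using assms(2) unfolding sphere_def by simp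
  have key: "gdist V w y x0 < gdist V w z x0 \<longleftrightarrow> y \<in> sphere V w x0 n"
    if "y \<in> nbrs V w z" for y
  proof -
    have zy: "adj V w z y" using that unfolding nbrs_def by simp
    then have yz: "adj V w y z" by (rule sympD[OF assms(1)])
    obtain j where j: "gdist V w x0 y = enat j"
      using gdist_adj_le[OF dz zy] by blast
    obtain i where "gdist V w x0 z = enat i" "i \<le> Suc j"
      using gdist_adj_le[OF j yz] .
    then have "n \<le> j" using dz by simp
    moreover have "y \<in> V" using zy unfolding adj_def by simp
    moreover have "gdist V w y x0 = enat j" "gdist V w z x0 = enat (Suc n)"
      using j dz gdist_commute[OF assms(1)] by metis+
    ultimately show ?thesis using j unfolding sphere_def by auto
  qed
  show ?thesis
  proof (rule set_eqI)
    fix y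
    show "y \<in> lower_nbrs V w x0 z \<longleftrightarrow> y \<in> nbrs V w z \<inter> sphere V w x0 n"
      using key[of y] unfolding lower_nbrs_def by blast
  qed
qed

lemma nbrs_minus_lower_nbrs:
  assumes "symp (adj V w)" and "bipartite V w" and "x \<in> sphere V w x0 n"
  shows "nbrs V w x - lower_nbrs V w x0 x = nbrs V w x \<inter> sphere V w x0 (Suc n)"
proof -
  have dx: "gdist V w x0 x = enat n" using assms(3) unfolding sphere_def by simp
  have key: "\<not> gdist V w y x0 < gdist V w x x0 \<longleftrightarrow> y \<in> sphere V w x0 (Suc n)"
    if "y \<in> nbrs V w x" for y
  proof -
    have xy: "adj V w x y" using that unfolding nbrs_def by simp
    then have "y \<in> V" unfolding adj_def by simp
    have commute: "gdist V w y x0 = gdist V w x0 y" "gdist V w x x0 = enat n"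
      using dx gdist_commute[OF assms(1)] by metis+
    from gdist_adj_bipartite[OF assms(1,2) dx xy] show ?thesis
      unfolding commute sphere_def using \<open>y \<in> V\<close> by cases auto
  qed
  show ?thesis
  proof (rule set_eqI)
    fix y
    show "y \<in> nbrs V w x - lower_nbrs V w x0 x \<longleftrightarrow> y \<in> nbrs V w x \<inter> sphere V w x0 (Suc n)"
      using key[of y] unfolding lower_nbrs_def by blast
  qed
qed

lemma sum_weights_Int_nbrs:
  assumes "weighted_graph V w m" and "x \<in> V" and "finite A"
  shows "(\<Sum>y\<in>A. w x y) = (\<Sum>y\<in>A \<inter> nbrs V w x. w x y)"
  using assms by (intro sum.mono_neutral_right) (auto intro: weight_eq_0_if_not_nbr)

lemma dminus_eq:
  assumes "weighted_graph V w m" and "z \<in> V"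
  shows "dminus V w m x0 z * m z = (\<Sum>y\<in>lower_nbrs V w x0 z. w z y)"
proof -
  have "dminus V w m x0 z = (\<Sum>y\<in>lower_nbrs V w x0 z. w z y) / m z"
    unfolding dminus_def lower_nbrs_def sum_divide_distrib[symmetric]
    by (simp add: weighted_graph_commute[OF assms(1), of z])
  then show ?thesis using weighted_graph_pos[OF assms] by simp
qed

lemma Deg_eq:
  assumes "weighted_graph V w m" and "x \<in> V"
  shows "Deg V w m x * m x = (\<Sum>y\<in>nbrs V w x. w x y)"
  using weighted_graph_pos[OF assms] unfolding Deg_def by simp

lemma weight_from_sphere_below:
  assumes "weighted_graph V w m" and "locally_finite V w"
    and "z \<in> sphere V w x0 (Suc n)"
  shows "(\<Sum>y\<in>sphere V w x0 n. w y z) = dminus V w m x0 z * m z"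
proof -
  have "z \<in> V" using assms(3) unfolding sphere_def by simp
  have "(\<Sum>y\<in>sphere V w x0 n. w y z) = (\<Sum>y\<in>sphere V w x0 n. w z y)"
    by (simp add: weighted_graph_commute[OF assms(1), of _ z])
  also have "\<dots> = (\<Sum>y\<in>lower_nbrs V w x0 z. w z y)"
    using sum_weights_Int_nbrs[OF assms(1) \<open>z \<in> V\<close> finite_sphere[OF assms(2)]]
      lower_nbrs_Suc[OF symp_adj[OF assms(1)] assms(3)] by (simp add: Int_commute)
  also have "\<dots> = dminus V w m x0 z * m z"
    using dminus_eq[OF assms(1) \<open>z \<in> V\<close>] by simp
  finally show ?thesis .
qed

lemma weight_to_sphere_above:
  assumes "weighted_graph V w m" and "locally_finite V w" and "bipartite V w"
    and "x \<in> sphere V w x0 n"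
  shows "(\<Sum>y\<in>sphere V w x0 (Suc n). w x y) = (Deg V w m x - dminus V w m x0 x) * m x"
proof -
  have "x \<in> V" using assms(4) unfolding sphere_def by simp
  have fin: "finite (nbrs V w x)" using assms(2) \<open>x \<in> V\<close> unfolding locally_finite_def by simp
  have "lower_nbrs V w x0 x \<subseteq> nbrs V w x" unfolding lower_nbrs_def by auto
  then have "(\<Sum>y\<in>nbrs V w x. w x y)
      = (\<Sum>y\<in>nbrs V w x - lower_nbrs V w x0 x. w x y) + (\<Sum>y\<in>lower_nbrs V w x0 x. w x y)"
    using fin by (rule sum.subset_diff)
  moreover have "(\<Sum>y\<in>sphere V w x0 (Suc n). w x y)
      = (\<Sum>y\<in>nbrs V w x - lower_nbrs V w x0 x. w x y)"
    using sum_weights_Int_nbrs[OF assms(1) \<open>x \<in> V\<close> finite_sphere[OF assms(2)]]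
      nbrs_minus_lower_nbrs[OF symp_adj[OF assms(1)] assms(3,4)] by (simp add: Int_commute)
  ultimately show ?thesis
    using Deg_eq[OF assms(1) \<open>x \<in> V\<close>] dminus_eq[OF assms(1) \<open>x \<in> V\<close>]
    by (simp add: left_diff_distrib)
qed

lemma HSS_sphere_mass_recurrence:
  assumes "weighted_graph V w m" and "locally_finite V w"
    and "W > 0" and "HSS V w m N W x0"
  shows "real (Suc n) * (\<Sum>x\<in>sphere V w x0 (Suc n). m x)
       = (N - real n) * (\<Sum>x\<in>sphere V w x0 n. m x)"
proof -
  have deg: "Deg V w m x = N * W" if "x \<in> sphere V w x0 k" for x k
    using assms(4) that unfolding HSS_def sphere_def by blast
  have dm: "dminus V w m x0 x = W * real k" if "x \<in> sphere V w x0 k" for x k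
  proof -
    have "gdist V w x x0 = enat k"
      using that gdist_commute[OF symp_adj[OF assms(1)], of x x0] unfolding sphere_def by simp
    then show ?thesis using assms(4) that unfolding HSS_def sphere_def by blast
  qed
  have bip: "bipartite V w" using assms(4) unfolding HSS_def by simp
  have "W * ((N - real n) * (\<Sum>x\<in>sphere V w x0 n. m x))
      = (\<Sum>x\<in>sphere V w x0 n. (Deg V w m x - dminus V w m x0 x) * m x)"
    by (simp add: sum_distrib_left deg dm algebra_simps cong: sum.cong)
  also have "\<dots> = (\<Sum>x\<in>sphere V w x0 n. \<Sum>y\<in>sphere V w x0 (Suc n). w x y)"
    by (simp add: weight_to_sphere_above[OF assms(1,2) bip])
  also have "\<dots> = (\<Sum>y\<in>sphere V w x0 (Suc n). \<Sum>x\<in>sphere V w x0 n. w x y)"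
    by (rule sum.swap)
  also have "\<dots> = (\<Sum>y\<in>sphere V w x0 (Suc n). dminus V w m x0 y * m y)"
    by (simp add: weight_from_sphere_below[OF assms(1,2)])
  also have "\<dots> = W * (real (Suc n) * (\<Sum>x\<in>sphere V w x0 (Suc n). m x))"
    by (simp add: sum_distrib_left dm algebra_simps cong: sum.cong)
  finally show ?thesis using assms(3) by simp
qed

theorem proposition2:
  fixes V :: "'a set" and w :: "'a \<Rightarrow> 'a \<Rightarrow> real" and m :: "'a \<Rightarrow> real"
    and N W :: real and x0 :: 'a and n :: nat
  assumes "weighted_graph V w m" and "locally_finite V w"
    and "N > 0" and "W > 0" and "HSS V w m N W x0"
  shows "(\<Sum>x\<in>sphere V w x0 n. m x) = m x0 * (N gchoose n)"
proof (induction n)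
  case 0
  have "x0 \<in> V" using assms(5) unfolding HSS_def by simp
  then show ?case by (simp add: sphere_0)
next
  case (Suc n)
  have "real (Suc n) * (\<Sum>x\<in>sphere V w x0 (Suc n). m x)
      = real (Suc n) * (m x0 * (N gchoose Suc n))"
    using HSS_sphere_mass_recurrence[OF assms(1,2,4,5), of n] Suc.IH gbinomial_mult_1[of N n]
    by (simp add: algebra_simps)
  then show ?case by simp
qed

end
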